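(* Let $(X,d_X,m_X)$, $(Y,d_Y,m_Y)$ be metric measure spaces and $p:X\to Y$ a 1-Lipschitz map with $p_*m_X=m_Y$, and let $\{\mu_y\}_{y\in Y}$ be a disintegration of $m_X$ for $p$. Assume there is a Borel set $\Omega\subset Y$ with $m_Y(Y\setminus\Omega)=0$ such that $W_2(\mu_y,\mu_{y'})=d_Y(y,y')$ for all $y,y'\in\Omega$. Let $y_0,y_1\in Y$ satisfy $W_2(\mu_{y_0},\mu_{y_1})=d_Y(y_0,y_1)$ and $p_*\mu_{y_i}=\delta_{y_i}$ for $i=0,1$. Then every optimal transport plan for $W_2(\mu_{y_0},\mu_{y_1})$ is concentrated on $\{(x,x')\in p^{-1}(y_0)\times p^{-1}(y_1): d_X(x,x')=d_Y(y_0,y_1)\}$.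
   Context: A metric measure space $(X,d,m)$: complete separable metric space with Borel measure satisfying $0<m(B_r(x))<\infty$ for all $x$, $r>0$. A disintegration of $m_X$ for $p$ is a family $\{\mu_y\}_{y\in Y}$ of Borel probability measures on $X$ such that $y\mapsto\mu_y(A)$ is Borel for all Borel $A$, $\mu_y(X\setminus p^{-1}(y))=0$ for $m_Y$-a.e. $y$, and $\int_Xf\,dm_X=\int_Y\int_Xf\,d\mu_y\,dm_Y(y)$ for every Borel $f:X\to[0,\infty]$. $W_2$ is the quadratic Wasserstein distance (possibly $+\infty$). *)

theory Defs
  imports "HOL-Probability.Probability"
begin

definition mms :: "('a::polish_space) measure \<Rightarrow> bool" where
  "mms m \<longleftrightarrow> sets m = sets borel \<and>
     (\<forall>x r. r > 0 \<longrightarrow> 0 < emeasure m (ball x r) \<and> emeasure m (ball x r) < \<infinity>)"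

definition lipschitz1 :: "('a::metric_space \<Rightarrow> 'b::metric_space) \<Rightarrow> bool" where
  "lipschitz1 p \<longleftrightarrow> (\<forall>x x'. dist (p x) (p x') \<le> dist x x')"

definition disintegration ::
  "('a::polish_space) measure \<Rightarrow> ('b::polish_space) measure \<Rightarrow> ('a \<Rightarrow> 'b) \<Rightarrow> ('b \<Rightarrow> 'a measure) \<Rightarrow> bool" where
  "disintegration mX mY p \<mu> \<longleftrightarrow>
     (\<forall>y. prob_space (\<mu> y) \<and> sets (\<mu> y) = sets borel) \<and>
     (\<forall>A \<in> sets borel. (\<lambda>y. emeasure (\<mu> y) A) \<in> borel_measurable mY) \<and>
     (AE y in mY. emeasure (\<mu> y) (UNIV - p -` {y}) = 0) \<and>
     (\<forall>f :: 'a \<Rightarrow> ennreal. f \<in> borel_measurable borel \<longrightarrow>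
        (\<integral>\<^sup>+ x. f x \<partial>mX) = (\<integral>\<^sup>+ y. (\<integral>\<^sup>+ x. f x \<partial>\<mu> y) \<partial>mY))"

definition couplings :: "('a::polish_space) measure \<Rightarrow> 'a measure \<Rightarrow> ('a \<times> 'a) measure set" where
  "couplings \<mu> \<nu> = {\<pi>. prob_space \<pi> \<and> sets \<pi> = sets borel \<and>
      distr \<pi> borel fst = \<mu> \<and> distr \<pi> borel snd = \<nu>}"

definition transport_cost :: "('a::metric_space \<times> 'a) measure \<Rightarrow> ennreal" where
  "transport_cost \<pi> = (\<integral>\<^sup>+ z. ennreal ((dist (fst z) (snd z))\<^sup>2) \<partial>\<pi>)"

definition W2sq :: "('a::polish_space) measure \<Rightarrow> 'a measure \<Rightarrow> ennreal" where
  "W2sq \<mu> \<nu> = (INF \<pi> \<in> couplings \<mu> \<nu>. transport_cost \<pi>)"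

definition W2 :: "('a::polish_space) measure \<Rightarrow> 'a measure \<Rightarrow> ennreal" where
  "W2 \<mu> \<nu> = (if W2sq \<mu> \<nu> = \<infinity> then \<infinity> else ennreal (sqrt (enn2real (W2sq \<mu> \<nu>))))"

definition optimal_plan :: "('a::polish_space) measure \<Rightarrow> 'a measure \<Rightarrow> ('a \<times> 'a) measure \<Rightarrow> bool" where
  "optimal_plan \<mu> \<nu> \<pi> \<longleftrightarrow> \<pi> \<in> couplings \<mu> \<nu> \<and> transport_cost \<pi> = W2sq \<mu> \<nu>"

end

theory Submission
  imports Defs
begin

text \<open>Since \<open>p\<close> pushes \<open>\<mu> y\<^sub>0\<close> and \<open>\<mu> y\<^sub>1\<close> to Dirac masses, any coupling \<open>\<pi>\<close> of them
  lives on \<open>p\<^sup>-\<^sup>1(y\<^sub>0) \<times> p\<^sup>-\<^sup>1(y\<^sub>1)\<close>, where the 1-Lipschitz property gives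
  \<open>d(x,x') \<ge> d(y\<^sub>0,y\<^sub>1) =: D\<close>. An optimal \<open>\<pi>\<close> has cost \<open>W\<^sub>2\<^sup>2 = D\<^sup>2\<close>.\<close>

lemma lipschitz1_borel_measurable:
  "lipschitz1 p \<Longrightarrow> p \<in> borel_measurable borel"
  unfolding lipschitz1_def
  by (intro borel_measurable_continuous_onI)
    (auto simp: continuous_on_iff intro: le_less_trans)

lemma AE_eq_of_distr_eq_return:
  fixes p :: "'a::topological_space \<Rightarrow> 'b::t1_space"
  assumes p: "p \<in> measurable \<nu> borel"
    and \<nu>: "distr \<nu> borel p = return borel y"
  shows "AE x in \<nu>. p x = y"
proof -
  have "AE x in distr \<nu> borel p. x = y"
    unfolding \<nu> by (simp add: AE_return)
  moreover have "{x \<in> space borel. x = y} \<in> sets borel"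
    by simp
  ultimately show ?thesis
    using AE_distr_iff[OF p] by simp
qed

lemma AE_comp_of_distr_eq_return:
  fixes p :: "'a::topological_space \<Rightarrow> 'b::t1_space"
  assumes p: "p \<in> borel_measurable borel"
    and f: "f \<in> measurable \<pi> borel"
    and \<nu>: "distr \<pi> borel f = \<nu>"
    and y: "distr \<nu> borel p = return borel y"
  shows "AE z in \<pi>. p (f z) = y"
proof -
  have "sets \<nu> = sets borel"
    using \<nu> by auto
  with p have "p \<in> measurable \<nu> borel"
    using measurable_cong_sets[OF _ refl] by blast
  then have "AE x in distr \<pi> borel f. p x = y"
    unfolding \<nu> using y by (rule AE_eq_of_distr_eq_return)
  moreover have "{x \<in> space borel. p x = y} \<in> sets borel"
    using p by measurable
  ultimately show ?thesis
    using AE_distr_iff[OF f] by simp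
qed

lemma W2sq_eq_power2:
  assumes "W2 \<mu> \<nu> = ennreal D" and "0 \<le> D"
  shows "W2sq \<mu> \<nu> = ennreal (D\<^sup>2)"
proof -
  have finite: "W2sq \<mu> \<nu> \<noteq> \<infinity>"
    using assms(1) unfolding W2_def by (auto split: if_splits)
  then have "sqrt (enn2real (W2sq \<mu> \<nu>)) = D"
    using assms unfolding W2_def by simp
  moreover have "enn2real (W2sq \<mu> \<nu>) = (sqrt (enn2real (W2sq \<mu> \<nu>)))\<^sup>2"
    by simp
  ultimately have "enn2real (W2sq \<mu> \<nu>) = D\<^sup>2"
    by simp
  moreover have "W2sq \<mu> \<nu> = ennreal (enn2real (W2sq \<mu> \<nu>))"
    using finite by (simp add: top.not_eq_extremum)
  ultimately show ?thesis
    by simp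
qed

lemma AE_eq_const_of_nn_integral_eq:
  fixes h :: "'a \<Rightarrow> real"
  assumes M: "prob_space M" and h: "h \<in> borel_measurable M"
    and ge: "AE x in M. c \<le> h x" and c: "0 \<le> c"
    and int: "(\<integral>\<^sup>+ x. ennreal (h x) \<partial>M) = ennreal c"
  shows "AE x in M. h x = c"
proof -
  define g where "g x = ennreal (h x - c)" for x
  have g: "g \<in> borel_measurable M"
    unfolding g_def using h by measurable
  have "integral\<^sup>N M g + ennreal c = (\<integral>\<^sup>+ x. g x + ennreal c \<partial>M)"
    using g prob_space.emeasure_space_1[OF M] by (simp add: nn_integral_add)
  also have "\<dots> = (\<integral>\<^sup>+ x. ennreal (h x) \<partial>M)"
    using ge by (intro nn_integral_cong_AE)
      (auto elim!: eventually_mono simp: g_def c ennreal_plus[symmetric])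
  finally have "ennreal c + integral\<^sup>N M g = ennreal c + 0"
    using int by (simp add: add.commute)
  then have "integral\<^sup>N M g = 0"
    by (simp add: ennreal_add_left_cancel)
  then have "AE x in M. g x = 0"
    using nn_integral_0_iff_AE[OF g] by simp
  with ge show ?thesis
    by eventually_elim (simp add: g_def ennreal_eq_0_iff)
qed

theorem proposition3p10:
  fixes mX :: "('a::polish_space) measure" and mY :: "('b::polish_space) measure"
    and p :: "'a \<Rightarrow> 'b" and \<mu> :: "'b \<Rightarrow> 'a measure"
    and \<Omega> :: "'b set" and y0 y1 :: 'b
  assumes "mms mX" and "mms mY"
    and "lipschitz1 p"
    and "distr mX mY p = mY"
    and "disintegration mX mY p \<mu>"
    and "\<Omega> \<in> sets borel" and "emeasure mY (UNIV - \<Omega>) = 0"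
    and "\<forall>y\<in>\<Omega>. \<forall>y'\<in>\<Omega>. W2 (\<mu> y) (\<mu> y') = ennreal (dist y y')"
    and "W2 (\<mu> y0) (\<mu> y1) = ennreal (dist y0 y1)"
    and "distr (\<mu> y0) borel p = return borel y0"
    and "distr (\<mu> y1) borel p = return borel y1"
  shows "\<forall>\<pi>. optimal_plan (\<mu> y0) (\<mu> y1) \<pi> \<longrightarrow>
           (AE z in \<pi>. p (fst z) = y0 \<and> p (snd z) = y1 \<and> dist (fst z) (snd z) = dist y0 y1)"
proof (intro allI impI)
  fix \<pi> assume "optimal_plan (\<mu> y0) (\<mu> y1) \<pi>"
  then have \<pi>: "prob_space \<pi>" "sets \<pi> = sets borel"
    "distr \<pi> borel fst = \<mu> y0" "distr \<pi> borel snd = \<mu> y1"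
    and cost: "transport_cost \<pi> = W2sq (\<mu> y0) (\<mu> y1)"
    unfolding optimal_plan_def couplings_def by auto
  have p: "p \<in> borel_measurable borel"
    using assms(3) by (rule lipschitz1_borel_measurable)
  have fst: "fst \<in> measurable \<pi> borel" and snd: "snd \<in> measurable \<pi> borel"
    and dist: "(\<lambda>z. (dist (fst z) (snd z))\<^sup>2) \<in> borel_measurable \<pi>"
    unfolding measurable_cong_sets[OF \<pi>(2) refl]
    by (intro borel_measurable_continuous_onI continuous_intros)+
  have fibres: "AE z in \<pi>. p (fst z) = y0 \<and> p (snd z) = y1"
    using AE_comp_of_distr_eq_return[OF p fst \<pi>(3) assms(10)]
      AE_comp_of_distr_eq_return[OF p snd \<pi>(4) assms(11)]
    by eventually_elim simp
  have lip: "dist (p x) (p x') \<le> dist x x'" for x x'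
    using assms(3) unfolding lipschitz1_def by blast
  from fibres have ge: "AE z in \<pi>. (dist y0 y1)\<^sup>2 \<le> (dist (fst z) (snd z))\<^sup>2"
    by eventually_elim (metis lip power_mono zero_le_dist)
  have int: "(\<integral>\<^sup>+ z. ennreal ((dist (fst z) (snd z))\<^sup>2) \<partial>\<pi>) = ennreal ((dist y0 y1)\<^sup>2)"
    using cost W2sq_eq_power2[OF assms(9)] unfolding transport_cost_def by simp
  have "AE z in \<pi>. (dist (fst z) (snd z))\<^sup>2 = (dist y0 y1)\<^sup>2"
    using AE_eq_const_of_nn_integral_eq[OF \<pi>(1) dist ge _ int] by simp
  with fibres show "AE z in \<pi>. p (fst z) = y0 \<and> p (snd z) = y1 \<and> dist (fst z) (snd z) = dist y0 y1"
    by eventually_elim (metis power2_eq_iff_nonneg zero_le_dist)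
qed

end
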